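(* Let $G$ be a finite, simple, undirected, connected graph with at least two vertices and let $v \in V(G)$. The following statements are equivalent: (i) $v$ is the $\mathcal{L}$-root leaf of some DFS ordering of $G$ starting in $v$; (ii) $v$ is the $\mathcal{L}$-root leaf of every DFS ordering of $G$ starting in $v$; (iii) $v$ is the $\mathcal{L}$-root leaf of some MCS ordering of $G$; (iv) $v$ is the $\mathcal{L}$-root leaf of some GS ordering of $G$; (v) $v$ is an $\mathcal{L}$-branch leaf of some GS ordering of $G$; (vi) $v$ is an $\mathcal{F}$-branch leaf of some GS ordering of $G$; (vii) $v$ is the end-vertex (last vertex) of some GS ordering of $G$; (viii) $v$ is not a cut vertex of $G$.
   Context: A vertex ordering of $G$ is a bijection $\sigma:\{1,\dots,n\}\to V(G)$; $u \prec_\sigma w$ means $u$ comes before $w$. Searches are defined by the following label search: initially every vertex has label $\emptyset$; for $i=1,\dots,n$, choose any unnumbered vertex $x$ such that there is no unnumbered $y$ with $\mathrm{label}(x) \prec_{\mathcal{A}} \mathrm{label}(y)$, set $\sigma(i)=x$, and add $i$ to the labels of all unnumbered neighbors of $x$. The orderings produced this way are the $\mathcal{A}$-orderings. Generic Search (GS): $A \prec B$ iff $A=\emptyset$ and $B\neq\emptyset$. Depth First Search (DFS): $A \prec B$ iff ($A=\emptyset$ and $B\neq\emptyset$) or $\max(A)<\max(B)$. Maximum Cardinality Search (MCS): $A \prec B$ iff $|A|<|B|$. For a GS ordering $\sigma$ of a connected graph $G$, the $\mathcal{F}$-tree of $\sigma$ is the spanning tree containing, for each vertex $v\neq\sigma(1)$,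 the edge from $v$ to its leftmost neighbor in $\sigma$; the $\mathcal{L}$-tree of $\sigma$ contains, for each $v \neq \sigma(1)$, the edge from $v$ to its rightmost neighbor $w$ with $w \prec_\sigma v$. A vertex is an $\mathcal{F}$-leaf ($\mathcal{L}$-leaf) of $\sigma$ if it is a leaf of the $\mathcal{F}$-tree ($\mathcal{L}$-tree) of $\sigma$; it is the $\mathcal{F}$-root leaf ($\mathcal{L}$-root leaf) if additionally it is $\sigma(1)$, and an $\mathcal{F}$-branch leaf ($\mathcal{L}$-branch leaf) otherwise. *)

theory Defs
  imports Main
begin

definition simple_graph :: "'a set \<Rightarrow> ('a \<Rightarrow> 'a \<Rightarrow> bool) \<Rightarrow> bool" where
  "simple_graph V E \<longleftrightarrow> finite V \<and> (\<forall>x y. E x y \<longrightarrow> E y x) \<and> (\<forall>x. \<not> E x x)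
     \<and> (\<forall>x y. E x y \<longrightarrow> x \<in> V \<and> y \<in> V)"

definition connected_on :: "'a set \<Rightarrow> ('a \<Rightarrow> 'a \<Rightarrow> bool) \<Rightarrow> bool" where
  "connected_on S E \<longleftrightarrow>
     (\<forall>u\<in>S. \<forall>w\<in>S. (\<lambda>x y. E x y \<and> x \<in> S \<and> y \<in> S)\<^sup>*\<^sup>* u w)"

definition cut_vertex :: "'a set \<Rightarrow> ('a \<Rightarrow> 'a \<Rightarrow> bool) \<Rightarrow> 'a \<Rightarrow> bool" where
  "cut_vertex V E v \<longleftrightarrow> v \<in> V \<and> \<not> connected_on (V - {v}) E"

text \<open>Vertex orderings are lists sigma; sigma(i) (1-based) is sigma ! (i-1).\<close>
definition vertex_ordering :: "'a set \<Rightarrow> 'a list \<Rightarrow> bool" where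
  "vertex_ordering V \<sigma> \<longleftrightarrow> distinct \<sigma> \<and> set \<sigma> = V"

text \<open>Label of an unnumbered vertex x just before step i+1 (i.e. after sigma(1..i) are
  numbered): the set of numbers j \<le> i such that sigma(j) is a neighbour of x.\<close>
definition lbl :: "('a \<Rightarrow> 'a \<Rightarrow> bool) \<Rightarrow> 'a list \<Rightarrow> nat \<Rightarrow> 'a \<Rightarrow> nat set" where
  "lbl E \<sigma> i x = {Suc j | j. j < i \<and> E (\<sigma> ! j) x}"

definition label_search_ordering ::
  "(nat set \<Rightarrow> nat set \<Rightarrow> bool) \<Rightarrow> 'a set \<Rightarrow> ('a \<Rightarrow> 'a \<Rightarrow> bool) \<Rightarrow> 'a list \<Rightarrow> bool" where
  "label_search_ordering prec V E \<sigma> \<longleftrightarrow> vertex_ordering V \<sigma> \<and>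
     (\<forall>i < length \<sigma>. \<forall>y \<in> set (drop (Suc i) \<sigma>).
        \<not> prec (lbl E \<sigma> i (\<sigma> ! i)) (lbl E \<sigma> i y))"

definition gs_prec :: "nat set \<Rightarrow> nat set \<Rightarrow> bool" where
  "gs_prec A B \<longleftrightarrow> A = {} \<and> B \<noteq> {}"

definition dfs_prec :: "nat set \<Rightarrow> nat set \<Rightarrow> bool" where
  "dfs_prec A B \<longleftrightarrow> (A = {} \<and> B \<noteq> {}) \<or> (A \<noteq> {} \<and> B \<noteq> {} \<and> Max A < Max B)"

definition mcs_prec :: "nat set \<Rightarrow> nat set \<Rightarrow> bool" where
  "mcs_prec A B \<longleftrightarrow> card A < card B"

abbreviation "GS_ordering \<equiv> label_search_ordering gs_prec"
abbreviation "DFS_ordering \<equiv> label_search_ordering dfs_prec"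
abbreviation "MCS_ordering \<equiv> label_search_ordering mcs_prec"

definition F_parent :: "('a \<Rightarrow> 'a \<Rightarrow> bool) \<Rightarrow> 'a list \<Rightarrow> 'a \<Rightarrow> 'a" where
  "F_parent E \<sigma> v = hd (filter (E v) \<sigma>)"

definition L_parent :: "('a \<Rightarrow> 'a \<Rightarrow> bool) \<Rightarrow> 'a list \<Rightarrow> 'a \<Rightarrow> 'a" where
  "L_parent E \<sigma> v = last (filter (E v) (takeWhile (\<lambda>x. x \<noteq> v) \<sigma>))"

definition tree_edge :: "'a list \<Rightarrow> ('a \<Rightarrow> 'a) \<Rightarrow> 'a \<Rightarrow> 'a \<Rightarrow> bool" where
  "tree_edge \<sigma> p u w \<longleftrightarrow> (u \<in> set \<sigma> \<and> u \<noteq> hd \<sigma> \<and> w = p u) \<or> (w \<in> set \<sigma> \<and> w \<noteq> hd \<sigma> \<and> u = p w)"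

definition tree_leaf :: "'a list \<Rightarrow> ('a \<Rightarrow> 'a) \<Rightarrow> 'a \<Rightarrow> bool" where
  "tree_leaf \<sigma> p v \<longleftrightarrow> v \<in> set \<sigma> \<and> card {w \<in> set \<sigma>. tree_edge \<sigma> p v w} = 1"

definition F_leaf where "F_leaf E \<sigma> v \<longleftrightarrow> tree_leaf \<sigma> (F_parent E \<sigma>) v"
definition L_leaf where "L_leaf E \<sigma> v \<longleftrightarrow> tree_leaf \<sigma> (L_parent E \<sigma>) v"

definition F_root_leaf where "F_root_leaf E \<sigma> v \<longleftrightarrow> F_leaf E \<sigma> v \<and> v = hd \<sigma>"
definition F_branch_leaf where "F_branch_leaf E \<sigma> v \<longleftrightarrow> F_leaf E \<sigma> v \<and> v \<noteq> hd \<sigma>"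
definition L_root_leaf where "L_root_leaf E \<sigma> v \<longleftrightarrow> L_leaf E \<sigma> v \<and> v = hd \<sigma>"
definition L_branch_leaf where "L_branch_leaf E \<sigma> v \<longleftrightarrow> L_leaf E \<sigma> v \<and> v \<noteq> hd \<sigma>"

end

theory Submission
  imports Defs
begin

(* In a GS ordering of a connected graph every vertex after the first has an earlier neighbour,
  so the F-parents and the L-parents form trees whose edges all point backwards in the ordering.
  Deleting a leaf of such a tree leaves every other vertex joined, by following parents, to one
  fixed vertex (the root, or the unique child of the root if the leaf is the root); hence leaves
  are never cut vertices, and the last vertex is always a branch leaf.
  Conversely, if G - v is connected, a generic search can postpone v to the very end, and a DFS,
  or a suitably tie-broken MCS, started in v visits G - v in a connected ordering; then the second
  vertex is the only L-child of v. *)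

lemma connected_on_crossing_edge:
  assumes "connected_on S E" "A \<subseteq> S" "a \<in> A" "b \<in> S - A"
  obtains x y where "x \<in> A" "y \<in> S - A" "E x y"
proof -
  have "(\<lambda>x y. E x y \<and> x \<in> S \<and> y \<in> S)\<^sup>*\<^sup>* a b"
    using assms unfolding connected_on_def by blast
  then have "b \<notin> A \<longrightarrow> (\<exists>x\<in>A. \<exists>y\<in>S - A. E x y)"
    by (induction rule: rtranclp_induct) (use assms in auto)
  then show thesis using assms that by blast
qed

lemma connected_onI_reach:
  assumes "symp E" and "\<And>u. u \<in> S \<Longrightarrow> (\<lambda>x y. E x y \<and> x \<in> S \<and> y \<in> S)\<^sup>*\<^sup>* u t"
  shows "connected_on S E"
proof -
  have "symp (\<lambda>x y. E x y \<and> x \<in> S \<and> y \<in> S)\<^sup>*\<^sup>*"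
    using assms(1) by (intro symp_rtranclp) (auto simp: symp_def)
  then show ?thesis
    using assms(2) unfolding connected_on_def by (meson rtranclp_trans sympD)
qed

lemma nth_image_tl: "i \<le> length xs \<Longrightarrow> nth xs ` {1..<i} = set (tl (take i xs))"
proof (cases xs)
  case (Cons x t)
  assume "i \<le> length xs"
  then have "set (tl (take i xs)) = nth t ` {0..<i - 1}"
    using Cons by (simp add: tl_take nth_image)
  also have "\<dots> = nth xs ` {1..<i}"
  proof -
    have "nth t = nth xs \<circ> Suc" using Cons by auto
    moreover have "Suc ` {0..<i - 1} = {1..<i}"
      by (cases i) (simp_all add: image_Suc_atLeastLessThan)
    ultimately show ?thesis by (metis image_comp)
  qed
  finally show ?thesis by simp
qed simp

lemma set_take_eq_insert_hd:
  "0 < i \<Longrightarrow> xs \<noteq> [] \<Longrightarrow> set (take i xs) = insert (hd xs) (set (tl (take i xs)))"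
  by (cases xs; cases i) auto

lemma hd_notin_set_tl_take: "distinct xs \<Longrightarrow> hd xs \<notin> set (tl (take i xs))"
  by (cases xs; cases i) (auto dest: in_set_takeD)

lemma nth_notin_set_take: "distinct xs \<Longrightarrow> i < length xs \<Longrightarrow> xs ! i \<notin> set (take i xs)"
  using distinct_take[of xs "Suc i"] by (simp add: take_Suc_conv_app_nth)

definition connected_ordering :: "('a \<Rightarrow> 'a \<Rightarrow> bool) \<Rightarrow> 'a list \<Rightarrow> bool" where
  "connected_ordering E xs \<longleftrightarrow> (\<forall>i<length xs. 0 < i \<longrightarrow> (\<exists>y\<in>set (take i xs). E (xs ! i) y))"

lemma connected_ordering_snoc:
  assumes "connected_ordering E xs" and "xs = [] \<or> (\<exists>y\<in>set xs. E x y)"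
  shows "connected_ordering E (xs @ [x])"
  using assms unfolding connected_ordering_def
  by (auto simp: nth_append less_Suc_eq)

lemma connected_ordering_tl_iff:
  "connected_ordering E (tl xs) \<longleftrightarrow>
     (\<forall>i<length xs. 1 < i \<longrightarrow> (\<exists>y\<in>set (tl (take i xs)). E (xs ! i) y))"
proof (cases xs)
  case (Cons x t)
  have "connected_ordering E t \<longleftrightarrow>
      (\<forall>k<length t. 0 < k \<longrightarrow> (\<exists>y\<in>set (tl (take (Suc k) (x # t))). E ((x # t) ! Suc k) y))"
    by (simp add: connected_ordering_def)
  also have "\<dots> \<longleftrightarrow>
      (\<forall>i<length (x # t). 1 < i \<longrightarrow> (\<exists>y\<in>set (tl (take i (x # t))). E ((x # t) ! i) y))"
    unfolding length_Cons All_less_Suc2 by simp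
  finally show ?thesis using Cons by simp
qed (simp add: connected_ordering_def)

lemma lbl_finite: "finite (lbl E s i x)"
  by (rule finite_subset[of _ "{1..i}"]) (auto simp: lbl_def)

lemma zero_notin_lbl: "0 \<notin> lbl E s i x"
  by (simp add: lbl_def)

lemma lbl_append:
  assumes "i \<le> length s"
  shows "lbl E (s @ t) i x = lbl E s i x"
  unfolding lbl_def using assms by (intro Collect_cong ex_cong1) (auto simp: nth_append)

(* The bound on i matters: lbl does not restrict j to positions of the list. *)
lemma lbl_empty_iff:
  assumes "i \<le> length s"
  shows "lbl E s i x = {} \<longleftrightarrow> (\<forall>y\<in>set (take i s). \<not> E y x)"
proof -
  have "lbl E s i x = {} \<longleftrightarrow> (\<forall>y\<in>nth s ` {0..<i}. \<not> E y x)"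
    unfolding lbl_def by force
  then show ?thesis unfolding nth_image[OF assms] .
qed

lemma lbl_subset_1_iff:
  assumes "i \<le> length s"
  shows "lbl E s i x \<subseteq> {1} \<longleftrightarrow> (\<forall>y\<in>set (tl (take i s)). \<not> E y x)"
proof -
  have "lbl E s i x \<subseteq> {1} \<longleftrightarrow> (\<forall>y\<in>nth s ` {1..<i}. \<not> E y x)"
    unfolding lbl_def by force
  then show ?thesis unfolding nth_image_tl[OF assms] .
qed

lemma label_search_ordering_mono:
  assumes "label_search_ordering P V E s"
    and "\<And>A B. finite A \<Longrightarrow> finite B \<Longrightarrow> Q A B \<Longrightarrow> P A B"
  shows "label_search_ordering Q V E s"
proof -
  have "Q (lbl E s i x) (lbl E s i y) \<Longrightarrow> P (lbl E s i x) (lbl E s i y)" for i x y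
    by (intro assms(2) lbl_finite)
  with assms(1) show ?thesis unfolding label_search_ordering_def by blast
qed

lemma DFS_ordering_imp_GS_ordering: "DFS_ordering V E s \<Longrightarrow> GS_ordering V E s"
  by (erule label_search_ordering_mono) (auto simp: gs_prec_def dfs_prec_def)

lemma MCS_ordering_imp_GS_ordering: "MCS_ordering V E s \<Longrightarrow> GS_ordering V E s"
  by (erule label_search_ordering_mono) (auto simp: gs_prec_def mcs_prec_def card_gt_0_iff)

definition partial_search_ordering ::
  "(nat set \<Rightarrow> nat set \<Rightarrow> bool) \<Rightarrow> 'a set \<Rightarrow> ('a \<Rightarrow> 'a \<Rightarrow> bool) \<Rightarrow> 'a list \<Rightarrow> bool" where
  "partial_search_ordering P V E s \<longleftrightarrow> distinct s \<and> set s \<subseteq> V \<and>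
     (\<forall>i<length s. \<forall>y\<in>V - set (take (Suc i) s). \<not> P (lbl E s i (s ! i)) (lbl E s i y))"

lemma label_search_ordering_iff_partial:
  "label_search_ordering P V E s \<longleftrightarrow> partial_search_ordering P V E s \<and> set s = V"
proof -
  have "set (drop n s) = set s - set (take n s)" if "distinct s" for n
  proof -
    have "set s = set (take n s) \<union> set (drop n s)"
      by (metis append_take_drop_id set_append)
    with set_take_disj_set_drop_if_distinct[OF that, of n n] show ?thesis by blast
  qed
  then show ?thesis
    unfolding label_search_ordering_def partial_search_ordering_def vertex_ordering_def
    by auto
qed

lemma label_search_orderingD:
  assumes "label_search_ordering P V E s" "i < length s" "y \<in> V - set (take (Suc i) s)"
  shows "\<not> P (lbl E s i (s ! i)) (lbl E s i y)"
  using assms by (simp add: label_search_ordering_iff_partial partial_search_ordering_def)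

lemma label_search_ordering_distinct_card:
  "label_search_ordering P V E s \<Longrightarrow> distinct s \<and> set s = V \<and> length s = card V"
  by (auto simp: label_search_ordering_def vertex_ordering_def distinct_card)

lemma partial_search_ordering_singleton:
  "v \<in> V \<Longrightarrow> \<not> P {} {} \<Longrightarrow> partial_search_ordering P V E [v]"
  by (simp add: partial_search_ordering_def lbl_def)

lemma partial_search_ordering_snoc:
  assumes "partial_search_ordering P V E s" and "x \<in> V - set s"
    and "\<forall>y\<in>V - set s. \<not> P (lbl E s (length s) x) (lbl E s (length s) y)"
  shows "partial_search_ordering P V E (s @ [x])"
  unfolding partial_search_ordering_def
proof (intro conjI allI impI ballI)
  show "distinct (s @ [x])" "set (s @ [x]) \<subseteq> V"
    using assms(1,2) by (auto simp: partial_search_ordering_def)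
  fix i y assume i: "i < length (s @ [x])" and y: "y \<in> V - set (take (Suc i) (s @ [x]))"
  have lbl: "lbl E (s @ [x]) i = lbl E s i" using i by (intro ext lbl_append) simp
  show "\<not> P (lbl E (s @ [x]) i ((s @ [x]) ! i)) (lbl E (s @ [x]) i y)"
  proof (cases "i < length s")
    case True
    then show ?thesis
      using assms(1) y by (simp add: lbl nth_append partial_search_ordering_def)
  next
    case False
    then have "i = length s" using i by simp
    then show ?thesis using assms(3) y unfolding lbl by simp
  qed
qed

lemma label_search_ordering_extend:
  assumes "finite V" "partial_search_ordering P V E s0" "Q s0"
    and step: "\<And>s. partial_search_ordering P V E s \<Longrightarrow> Q s \<Longrightarrow> set s \<noteq> V \<Longrightarrow>
       \<exists>x\<in>V - set s. Q (s @ [x]) \<and> (\<forall>y\<in>V - set s. \<not> P (lbl E s (length s) x) (lbl E s (length s) y))"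
  shows "\<exists>s. label_search_ordering P V E s \<and> Q s"
  using assms(2,3)
proof (induction "card V - length s0" arbitrary: s0 rule: less_induct)
  case less
  show ?case
  proof (cases "set s0 = V")
    case True
    then show ?thesis using less.prems label_search_ordering_iff_partial by blast
  next
    case False
    then obtain x where x: "x \<in> V - set s0" "Q (s0 @ [x])"
      and max: "\<forall>y\<in>V - set s0. \<not> P (lbl E s0 (length s0) x) (lbl E s0 (length s0) y)"
      using step less.prems by blast
    have "distinct s0" "set s0 \<subset> V"
      using less.prems(1) False by (auto simp: partial_search_ordering_def)
    then have "length s0 < card V"
      using assms(1) by (metis distinct_card psubset_card_mono)
    then have "card V - length (s0 @ [x]) < card V - length s0" by simp
    then show ?thesis
      using less.hyps partial_search_ordering_snoc[OF less.prems(1) x(1) max] x(2) by blast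
  qed
qed

lemma finite_maximizer:
  fixes f :: "'a \<Rightarrow> nat"
  assumes "finite C" "C \<noteq> {}"
  shows "\<exists>x\<in>C. \<forall>y\<in>C. f y \<le> f x"
proof -
  have "Max (f ` C) \<in> f ` C" using assms by (intro Max_in) auto
  then obtain x where x: "x \<in> C" "Max (f ` C) = f x" by (rule imageE)
  have "f y \<le> f x" if "y \<in> C" for y
    using assms(1) that unfolding x(2)[symmetric] by simp
  with x(1) show ?thesis by blast
qed

lemma label_search_ordering_from:
  fixes key :: "nat set \<Rightarrow> nat"
  assumes "finite V" "v \<in> V" and key: "\<And>A B. P A B \<Longrightarrow> key A < key B"
  shows "\<exists>s. label_search_ordering P V E s \<and> hd s = v"
proof -
  have "partial_search_ordering P V E [v]"
    using assms(2) key[of "{}" "{}"] by (intro partial_search_ordering_singleton) auto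
  moreover have "\<exists>x\<in>V - set s. hd (s @ [x]) = v \<and>
      (\<forall>y\<in>V - set s. \<not> P (lbl E s (length s) x) (lbl E s (length s) y))"
    if "partial_search_ordering P V E s" "s \<noteq> [] \<and> hd s = v" "set s \<noteq> V" for s
  proof -
    have "finite (V - set s)" "V - set s \<noteq> {}"
      using that(1,3) assms(1) by (auto simp: partial_search_ordering_def)
    then obtain x where "x \<in> V - set s"
      and "\<forall>y\<in>V - set s. key (lbl E s (length s) y) \<le> key (lbl E s (length s) x)"
      using finite_maximizer[of "V - set s" "\<lambda>y. key (lbl E s (length s) y)"] by blast
    then show ?thesis using that(2) key by (auto intro!: bexI[of _ x] dest: leD)
  qed
  ultimately have "\<exists>s. label_search_ordering P V E s \<and> s \<noteq> [] \<and> hd s = v"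
    using label_search_ordering_extend[of V P E "[v]" "\<lambda>s. s \<noteq> [] \<and> hd s = v"] assms(1)
    by auto
  then show ?thesis by blast
qed

definition dfs_key :: "nat set \<Rightarrow> nat" where
  "dfs_key A = (if A = {} then 0 else Suc (Max A))"

lemma dfs_prec_iff_dfs_key: "dfs_prec A B \<longleftrightarrow> dfs_key A < dfs_key B"
  by (auto simp: dfs_prec_def dfs_key_def)

lemma DFS_ordering_from:
  assumes "finite V" "v \<in> V"
  shows "\<exists>s. DFS_ordering V E s \<and> hd s = v"
  using assms
  by (rule label_search_ordering_from[where key = dfs_key]) (simp add: dfs_prec_iff_dfs_key)

lemma GS_ordering_ending_at:
  assumes "finite V" "connected_on (V - {v}) E" "v \<in> V" "2 \<le> card V"
  shows "\<exists>s. GS_ordering V E s \<and> last s = v"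
proof -
  have "card (V - {v}) > 0" using assms(3,4) by (simp add: card_Diff_singleton)
  then obtain u where u: "u \<in> V" "u \<noteq> v" by (auto simp: card_gt_0_iff)
  define Q where "Q s \<longleftrightarrow> s \<noteq> [] \<and> (v \<in> set s \<longrightarrow> set s = V \<and> last s = v)" for s
  have step: "\<exists>x\<in>V - set s. Q (s @ [x]) \<and>
      (\<forall>y\<in>V - set s. \<not> gs_prec (lbl E s (length s) x) (lbl E s (length s) y))"
    if s: "partial_search_ordering gs_prec V E s" "Q s" "set s \<noteq> V" for s
  proof (cases "set s = V - {v}")
    case True
    then show ?thesis using assms(3) by (auto simp: Q_def gs_prec_def)
  next
    case False
    have "v \<notin> set s" "s \<noteq> []" "set s \<subseteq> V"
      using s by (auto simp: Q_def partial_search_ordering_def)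
    then have "set s \<subseteq> V - {v}" "hd s \<in> set s" "\<exists>b. b \<in> (V - {v}) - set s"
      using False by auto
    then obtain a b where "a \<in> set s" "b \<in> (V - {v}) - set s" "E a b"
      by (metis connected_on_crossing_edge[OF assms(2)])
    then have "lbl E s (length s) b \<noteq> {}"
      by (simp add: lbl_empty_iff) blast
    then show ?thesis
      using \<open>b \<in> (V - {v}) - set s\<close> \<open>s \<noteq> []\<close> \<open>v \<notin> set s\<close>
      by (intro bexI[of _ b]) (auto simp: Q_def gs_prec_def)
  qed
  have "partial_search_ordering gs_prec V E [u]" "Q [u]"
    using u by (auto simp: Q_def gs_prec_def intro: partial_search_ordering_singleton)
  then obtain s where "GS_ordering V E s" "Q s"
    using label_search_ordering_extend[OF assms(1) _ _ step] by blast
  then show ?thesis using assms(3) by (auto simp: Q_def label_search_ordering_iff_partial)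
qed

lemma GS_ordering_connected_ordering:
  assumes gs: "GS_ordering V E s" and conn: "connected_on V E" and sym: "symp E"
  shows "connected_ordering E s"
  unfolding connected_ordering_def
proof (intro allI impI)
  fix i assume i: "i < length s" "0 < i"
  have s: "distinct s" "set s = V"
    using label_search_ordering_distinct_card[OF gs] by auto
  have prefix: "set (take i s) = nth s ` {0..<i}"
    using i by (simp add: nth_image)
  show "\<exists>y\<in>set (take i s). E (s ! i) y"
  proof (rule ccontr)
    assume none: "\<not> (\<exists>y\<in>set (take i s). E (s ! i) y)"
    have "s ! 0 \<in> set (take i s)" "s ! i \<in> V - set (take i s)" "set (take i s) \<subseteq> V"
      using i s nth_notin_set_take[OF s(1) i(1)] prefix set_take_subset[of i s] by auto
    then obtain a b where ab: "a \<in> set (take i s)" "b \<in> V - set (take i s)" "E a b"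
      by (metis connected_on_crossing_edge[OF conn])
    have "b \<noteq> s ! i" using none ab sym by (auto dest: sympD)
    then have "b \<in> V - set (take (Suc i) s)"
      using ab(2) i(1) by (simp add: take_Suc_conv_app_nth)
    moreover have "lbl E s i (s ! i) = {}"
      using none sym i(1) by (auto simp: lbl_empty_iff dest: sympD)
    moreover have "lbl E s i b \<noteq> {}"
      using ab i(1) by (auto simp: lbl_empty_iff)
    ultimately show False
      using label_search_orderingD[OF gs i(1)] by (auto simp: gs_prec_def)
  qed
qed

definition earlier_neighbour_parent :: "('a \<Rightarrow> 'a \<Rightarrow> bool) \<Rightarrow> 'a list \<Rightarrow> ('a \<Rightarrow> 'a) \<Rightarrow> bool" where
  "earlier_neighbour_parent E s p \<longleftrightarrow>
     (\<forall>i<length s. 0 < i \<longrightarrow> (\<exists>j<i. p (s ! i) = s ! j \<and> E (s ! i) (s ! j)))"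

lemma earlier_neighbour_parentE:
  assumes "earlier_neighbour_parent E s p" "w \<in> set s" "w \<noteq> hd s"
  obtains i j where "j < i" "i < length s" "w = s ! i" "p w = s ! j" "E w (p w)"
proof -
  obtain i where i: "i < length s" "w = s ! i"
    using assms(2) by (metis in_set_conv_nth)
  have "0 < i" using i assms(3) by (cases i) (auto simp: hd_conv_nth)
  then obtain j where "j < i" "p (s ! i) = s ! j" "E (s ! i) (s ! j)"
    using assms(1) i(1) unfolding earlier_neighbour_parent_def by blast
  with i show thesis by (intro that[of j i]) auto
qed

lemma earlier_neighbour_parentI:
  assumes "\<And>i. i < length s \<Longrightarrow> 0 < i \<Longrightarrow> p (s ! i) \<in> set (filter (E (s ! i)) (take i s))"
  shows "earlier_neighbour_parent E s p"
  unfolding earlier_neighbour_parent_def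
proof (intro allI impI)
  fix i assume "i < length s" "0 < i"
  then have "p (s ! i) \<in> nth s ` {0..<i}" "E (s ! i) (p (s ! i))"
    using assms[of i] nth_image[of i s] by auto
  then show "\<exists>j<i. p (s ! i) = s ! j \<and> E (s ! i) (s ! j)" by auto
qed

lemma takeWhile_neq_nth:
  "distinct xs \<Longrightarrow> i < length xs \<Longrightarrow> takeWhile (\<lambda>x. x \<noteq> xs ! i) xs = take i xs"
  by (rule takeWhile_eq_take_P_nth) (auto simp: nth_eq_iff_index_eq)

lemma L_parent_nth:
  "distinct s \<Longrightarrow> i < length s \<Longrightarrow> L_parent E s (s ! i) = last (filter (E (s ! i)) (take i s))"
  by (simp add: L_parent_def takeWhile_neq_nth)

lemma F_parent_nth:
  "filter (E (s ! i)) (take i s) \<noteq> [] \<Longrightarrow> F_parent E s (s ! i) = hd (filter (E (s ! i)) (take i s))"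
  unfolding F_parent_def by (metis append_take_drop_id filter_append hd_append2)

lemma search_tree_parents:
  assumes "distinct s" "connected_ordering E s"
  shows "earlier_neighbour_parent E s (L_parent E s)" "earlier_neighbour_parent E s (F_parent E s)"
proof -
  have ne: "filter (E (s ! i)) (take i s) \<noteq> []" if "i < length s" "0 < i" for i
    using assms(2) that unfolding connected_ordering_def filter_empty_conv by blast
  show "earlier_neighbour_parent E s (L_parent E s)"
  proof (rule earlier_neighbour_parentI)
    fix i assume i: "i < length s" "0 < i"
    show "L_parent E s (s ! i) \<in> set (filter (E (s ! i)) (take i s))"
      using ne[OF i] unfolding L_parent_nth[OF assms(1) i(1)] by (rule last_in_set)
  qed
  show "earlier_neighbour_parent E s (F_parent E s)"
  proof (rule earlier_neighbour_parentI)
    fix i assume i: "i < length s" "0 < i"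
    show "F_parent E s (s ! i) \<in> set (filter (E (s ! i)) (take i s))"
      using ne[OF i] unfolding F_parent_nth[of E s i, OF ne[OF i]] by (rule hd_in_set)
  qed
qed

definition tree_children :: "'a list \<Rightarrow> ('a \<Rightarrow> 'a) \<Rightarrow> 'a \<Rightarrow> 'a set" where
  "tree_children s p v = {w \<in> set s. w \<noteq> hd s \<and> p w = v}"

lemma tree_leaf_iff_children:
  assumes "distinct s" "earlier_neighbour_parent E s p" "v \<in> set s"
  shows "tree_leaf s p v \<longleftrightarrow>
    (if v = hd s then card (tree_children s p v) = 1 else tree_children s p v = {})"
proof -
  let ?C = "tree_children s p v"
  have nbrs: "{w \<in> set s. tree_edge s p v w} = {w \<in> set s. v \<noteq> hd s \<and> w = p v} \<union> ?C"
    using assms(3) by (auto simp: tree_edge_def tree_children_def)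
  show ?thesis
  proof (cases "v = hd s")
    case True
    then show ?thesis using nbrs assms(3) by (simp add: tree_leaf_def)
  next
    case False
    obtain i j where ij: "j < i" "i < length s" "v = s ! i" "p v = s ! j"
      using assms(2,3) False by (rule earlier_neighbour_parentE)
    have "p v \<notin> ?C"
    proof
      assume "p v \<in> ?C"
      then have "p v \<in> set s" "p v \<noteq> hd s" "p (p v) = v"
        by (auto simp: tree_children_def)
      then obtain i' k where "k < i'" "i' < length s" "p v = s ! i'" "v = s ! k"
        using assms(2) by (metis earlier_neighbour_parentE)
      then show False
        using ij assms(1) by (metis nth_eq_iff_index_eq order.strict_trans less_irrefl)
    qed
    moreover have "{w \<in> set s. v \<noteq> hd s \<and> w = p v} = {p v}"
      using False ij by auto
    moreover have "finite ?C" by (simp add: tree_children_def)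
    ultimately show ?thesis
      using nbrs False assms(3) by (simp add: tree_leaf_def)
  qed
qed

lemma tree_leaf_last:
  assumes "distinct s" "2 \<le> length s" "earlier_neighbour_parent E s p"
  shows "tree_leaf s p (last s)" "last s \<noteq> hd s"
proof -
  have "s \<noteq> []" using assms(2) by auto
  then have ends: "last s = s ! (length s - 1)" "hd s = s ! 0"
    by (simp_all add: last_conv_nth hd_conv_nth)
  show "last s \<noteq> hd s"
    unfolding ends using assms(1,2) by (subst nth_eq_iff_index_eq) auto
  have "w \<notin> tree_children s p (last s)" for w
  proof
    assume "w \<in> tree_children s p (last s)"
    then obtain i j where "j < i" "i < length s" "p w = s ! j" "p w = last s"
      using assms(3) unfolding tree_children_def by (blast elim: earlier_neighbour_parentE)
    then show False using assms(1) ends by (simp add: nth_eq_iff_index_eq)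
  qed
  then show "tree_leaf s p (last s)"
    using tree_leaf_iff_children[OF assms(1,3) last_in_set[OF \<open>s \<noteq> []\<close>]] \<open>last s \<noteq> hd s\<close>
    by auto
qed

lemma reach_along_parents_avoiding:
  assumes "earlier_neighbour_parent E s p" "hd s \<in> {v, t}" "t \<noteq> v"
    and "tree_children s p v \<subseteq> {t}" and "u \<in> set s - {v}"
  shows "(\<lambda>x y. E x y \<and> x \<in> set s - {v} \<and> y \<in> set s - {v})\<^sup>*\<^sup>* u t"
proof -
  let ?R = "\<lambda>x y. E x y \<and> x \<in> set s - {v} \<and> y \<in> set s - {v}"
  obtain i where "i < length s" "u = s ! i"
    using assms(5) by (metis DiffD1 in_set_conv_nth)
  then show ?thesis using assms(5)
  proof (induction i arbitrary: u rule: less_induct)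
    case (less i)
    show ?case
    proof (cases "u = t")
      case False
      have "u \<noteq> hd s" using False less.prems(3) assms(2) by auto
      moreover have "u \<notin> tree_children s p v" using False assms(4) by auto
      ultimately have "p u \<noteq> v" using less.prems(3) by (auto simp: tree_children_def)
      have "0 < i" using \<open>u \<noteq> hd s\<close> less.prems by (cases i) (auto simp: hd_conv_nth)
      then obtain j where j: "j < i" "p u = s ! j" "E u (s ! j)"
        using assms(1) less.prems unfolding earlier_neighbour_parent_def by blast
      then have "s ! j \<in> set s - {v}"
        using less.prems \<open>p u \<noteq> v\<close> by auto
      then have "?R u (s ! j)" "?R\<^sup>*\<^sup>* (s ! j) t"
        using less j by auto
      then show ?thesis by (rule converse_rtranclp_into_rtranclp)
    qed simp
  qed
qed

lemma connected_on_remove_tree_leaf: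
  assumes "distinct s" "symp E" "earlier_neighbour_parent E s p" "tree_leaf s p v"
  shows "connected_on (set s - {v}) E"
proof -
  have v: "v \<in> set s" using assms(4) by (simp add: tree_leaf_def)
  note leaf = assms(4)[unfolded tree_leaf_iff_children[OF assms(1,3) v]]
  obtain t where "t \<noteq> v" "hd s \<in> {v, t}" "tree_children s p v \<subseteq> {t}"
  proof (cases "v = hd s")
    case True
    then obtain c where "tree_children s p v = {c}"
      using leaf by (auto simp: card_1_singleton_iff)
    then show thesis using that[of c] True by (auto simp: tree_children_def)
  next
    case False
    then show thesis using that[of "hd s"] leaf by auto
  qed
  then show ?thesis
    using reach_along_parents_avoiding[OF assms(3)] by (intro connected_onI_reach[OF assms(2)]) auto
qed

lemma L_root_leaf_hd:
  assumes "distinct s" "2 \<le> length s" "connected_ordering E s" "connected_ordering E (tl s)"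
  shows "L_root_leaf E s (hd s)"
proof -
  let ?p = "L_parent E s"
  have par: "earlier_neighbour_parent E s ?p"
    using search_tree_parents(1)[OF assms(1,3)] .
  have ne: "s \<noteq> []" using assms(2) by auto
  then have s: "hd s = s ! 0" "take 1 s = [s ! 0]" by (cases s; simp)+
  have "tree_children s ?p (hd s) = {s ! 1}"
  proof (intro equalityI subsetI)
    fix w assume w: "w \<in> tree_children s ?p (hd s)"
    then obtain i where i: "i < length s" "w = s ! i" "0 < i"
      by (auto simp: tree_children_def elim!: earlier_neighbour_parentE[OF par])
    show "w \<in> {s ! 1}"
    proof (rule ccontr)
      assume "w \<notin> {s ! 1}"
      then have "1 < i" using i by (cases "i = 1") auto
      then have "filter (E (s ! i)) (tl (take i s)) \<noteq> []"
        using assms(4) i(1) by (auto simp: connected_ordering_tl_iff filter_empty_conv)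
      moreover have "take i s = hd s # tl (take i s)"
        using i ne by (cases s; cases i) auto
      ultimately have "?p w = last (filter (E (s ! i)) (tl (take i s)))"
        using L_parent_nth[OF assms(1) i(1)] i(2) by (metis filter.simps(2) last_ConsR)
      then have "?p w \<in> set (tl (take i s))"
        using \<open>filter (E (s ! i)) (tl (take i s)) \<noteq> []\<close> by (metis last_in_set filter_is_subset subsetD)
      then show False
        using w hd_notin_set_tl_take[OF assms(1)] by (auto simp: tree_children_def)
    qed
  next
    fix w assume "w \<in> {s ! 1}"
    moreover have "\<exists>y\<in>set (take 1 s). E (s ! 1) y"
      using assms(2,3) unfolding connected_ordering_def by simp
    then have "E (s ! 1) (s ! 0)" unfolding s(2) by simp
    moreover have "s ! 1 \<noteq> hd s"
      unfolding s(1) using assms(1,2) by (subst nth_eq_iff_index_eq) auto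
    ultimately show "w \<in> tree_children s ?p (hd s)"
      using assms(2) L_parent_nth[OF assms(1), of 1] s by (auto simp: tree_children_def)
  qed
  then show ?thesis
    using tree_leaf_iff_children[OF assms(1) par] ne
    by (simp add: L_root_leaf_def L_leaf_def)
qed

lemma dfs_prec_if_subset_1:
  assumes "A \<subseteq> {1}" "finite B" "0 \<notin> B" "\<not> B \<subseteq> {1}"
  shows "dfs_prec A B"
proof -
  obtain k where "k \<in> B" "1 < k" using assms(3,4) by (metis less_one linorder_neqE_nat subsetI singletonI)
  then have "1 < Max B" using Max_ge[OF assms(2)] by (meson less_le_trans)
  then show ?thesis using assms(1) \<open>k \<in> B\<close> by (auto simp: dfs_prec_def subset_singleton_iff)
qed

lemma DFS_ordering_tl_connected:
  assumes dfs: "DFS_ordering V E s" and sym: "symp E" and conn: "connected_on (V - {hd s}) E"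
  shows "connected_ordering E (tl s)"
  unfolding connected_ordering_tl_iff
proof (intro allI impI)
  fix i assume i: "i < length s" "1 < i"
  have ne: "s \<noteq> []" using i by auto
  have s: "distinct s" "set s = V" "hd s = s ! 0"
    using label_search_ordering_distinct_card[OF dfs] ne by (auto simp: hd_conv_nth)
  let ?A = "set (tl (take i s))"
  have A: "?A = nth s ` {1..<i}" using nth_image_tl[of i s] i by simp
  show "\<exists>y\<in>?A. E (s ! i) y"
  proof (rule ccontr)
    assume none: "\<not> (\<exists>y\<in>?A. E (s ! i) y)"
    (* Then the label of s ! i lies within {1}, whereas an edge of G - hd s leaving ?A gives an
      unnumbered vertex b with a larger label, which DFS would have preferred. *)
    have "?A \<subseteq> set s" using A i by auto
    then have "?A \<subseteq> V - {hd s}"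
      using hd_notin_set_tl_take[OF s(1), of i] s(2) by blast
    moreover have "s ! 1 \<in> ?A" using A i by auto
    moreover have neq: "s ! i \<noteq> s ! j" if "j < i" for j
      using s(1) i(1) that by (metis nth_eq_iff_index_eq less_trans less_not_refl)
    then have "s ! i \<notin> ?A" unfolding A by (metis atLeastLessThan_iff imageE)
    then have "s ! i \<in> (V - {hd s}) - ?A"
      using s i neq[of 0] by auto
    ultimately obtain a b where ab: "a \<in> ?A" "b \<in> (V - {hd s}) - ?A" "E a b"
      by (metis connected_on_crossing_edge[OF conn])
    have "b \<noteq> s ! i" using none ab sym by (auto dest: sympD)
    moreover have "set (take (Suc i) s) = insert (hd s) ?A \<union> {s ! i}"
      using i ne by (simp add: take_Suc_conv_app_nth set_take_eq_insert_hd)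
    ultimately have b: "b \<in> V - set (take (Suc i) s)" using ab(2) by auto
    have "lbl E s i (s ! i) \<subseteq> {1}"
      unfolding lbl_subset_1_iff[OF less_imp_le[OF i(1)]] using none sym by (auto dest: sympD)
    moreover have "\<not> lbl E s i b \<subseteq> {1}"
      unfolding lbl_subset_1_iff[OF less_imp_le[OF i(1)]] using ab by auto
    ultimately have "dfs_prec (lbl E s i (s ! i)) (lbl E s i b)"
      by (intro dfs_prec_if_subset_1 lbl_finite zero_notin_lbl)
    with label_search_orderingD[OF dfs i(1) b] show False ..
  qed
qed

lemma MCS_ordering_from_nonseparating:
  assumes "finite V" "symp E" "connected_on (V - {v}) E" "v \<in> V"
  shows "\<exists>s. MCS_ordering V E s \<and> hd s = v \<and> connected_ordering E (tl s)"
proof -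
  define Q where "Q s \<longleftrightarrow> s \<noteq> [] \<and> hd s = v \<and> connected_ordering E (tl s)" for s
  have step: "\<exists>x\<in>V - set s. Q (s @ [x]) \<and>
      (\<forall>y\<in>V - set s. \<not> mcs_prec (lbl E s (length s) x) (lbl E s (length s) y))"
    if s: "partial_search_ordering mcs_prec V E s" "Q s" "set s \<noteq> V" for s
  proof -
    let ?L = "lbl E s (length s)"
    have s': "distinct s" "set s \<subseteq> V" "s \<noteq> []" "hd s = v" "connected_ordering E (tl s)"
      using s(1,2) by (auto simp: Q_def partial_search_ordering_def)
    have set_s: "set s = insert v (set (tl s))" "v \<notin> set (tl s)"
      using s'(1,3,4) by (metis distinct.simps(2) list.collapse list.simps(15))+
    have "finite (V - set s)" "V - set s \<noteq> {}" using s'(2) s(3) assms(1) by auto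
    then obtain m where m: "m \<in> V - set s" "\<forall>y\<in>V - set s. card (?L y) \<le> card (?L m)"
      using finite_maximizer[of "V - set s" "\<lambda>y. card (?L y)"] by blast
    have "\<exists>x\<in>V - set s. (tl s = [] \<or> (\<exists>y\<in>set (tl s). E x y)) \<and>
        (\<forall>y\<in>V - set s. card (?L y) \<le> card (?L x))"
    (* Tie-break: when all labels have at most one element, an unnumbered neighbour of tl s is
      among the maximizers. *)
    proof (cases "tl s = [] \<or> \<not> ?L m \<subseteq> {1}")
      case True
      then have "tl s = [] \<or> (\<exists>y\<in>set (tl s). E m y)"
        unfolding lbl_subset_1_iff[OF order.refl] using assms(2) by (auto dest: sympD)
      then show ?thesis using m by blast
    next
      case False
      have "set (tl s) \<subseteq> V - {v}" "hd (tl s) \<in> set (tl s)" "m \<in> (V - {v}) - set (tl s)"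
        using False m s'(2) set_s by auto
      then obtain a b where ab: "a \<in> set (tl s)" "b \<in> (V - {v}) - set (tl s)" "E a b"
        by (metis connected_on_crossing_edge[OF assms(3)])
      have "?L b \<noteq> {}"
        unfolding lbl_empty_iff[OF order.refl] using ab set_s by auto
      then have "1 \<le> card (?L b)" by (simp add: lbl_finite Suc_le_eq card_gt_0_iff)
      moreover have "card (?L m) \<le> 1"
        using False card_mono[of "{1::nat}" "?L m"] by auto
      ultimately have "\<forall>y\<in>V - set s. card (?L y) \<le> card (?L b)"
        using m(2) by force
      moreover have "b \<in> V - set s" using ab set_s by auto
      ultimately show ?thesis using ab assms(2) by (blast dest: sympD)
    qed
    then obtain x where "x \<in> V - set s" "tl s = [] \<or> (\<exists>y\<in>set (tl s). E x y)"
      "\<forall>y\<in>V - set s. card (?L y) \<le> card (?L x)" by blast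
    moreover have "tl (s @ [x]) = tl s @ [x]" using s'(3) by simp
    ultimately show ?thesis
      using s' connected_ordering_snoc[OF s'(5)]
      by (intro bexI[of _ x]) (auto simp: Q_def mcs_prec_def not_less)
  qed
  have "partial_search_ordering mcs_prec V E [v]" "Q [v]"
    using assms(4) by (auto simp: Q_def mcs_prec_def connected_ordering_def
        intro: partial_search_ordering_singleton)
  then obtain s where "MCS_ordering V E s" "Q s"
    using label_search_ordering_extend[OF assms(1) _ _ step] by blast
  then show ?thesis by (auto simp: Q_def)
qed

lemma GS_ordering_leaf_nonseparating:
  assumes "GS_ordering V E s" "connected_on V E" "symp E" "L_leaf E s v \<or> F_leaf E s v"
  shows "connected_on (V - {v}) E"
proof -
  have s: "distinct s" "set s = V" using label_search_ordering_distinct_card[OF assms(1)] by auto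
  note parents = search_tree_parents[OF s(1) GS_ordering_connected_ordering[OF assms(1-3)]]
  show ?thesis
    using assms(4) connected_on_remove_tree_leaf[OF s(1) assms(3) parents(1)]
      connected_on_remove_tree_leaf[OF s(1) assms(3) parents(2)] s(2)
    by (auto simp: L_leaf_def F_leaf_def)
qed

lemma GS_ordering_last_branch_leaf:
  assumes "GS_ordering V E s" "connected_on V E" "symp E" "2 \<le> card V"
  shows "L_branch_leaf E s (last s) \<and> F_branch_leaf E s (last s)"
proof -
  have s: "distinct s" "2 \<le> length s" using label_search_ordering_distinct_card[OF assms(1)] assms(4) by auto
  note parents = search_tree_parents[OF s(1) GS_ordering_connected_ordering[OF assms(1-3)]]
  show ?thesis
    using tree_leaf_last[OF s parents(1)] tree_leaf_last[OF s parents(2)]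
    by (simp add: L_branch_leaf_def F_branch_leaf_def L_leaf_def F_leaf_def)
qed

lemma GS_ordering_L_root_leaf:
  assumes "GS_ordering V E s" "connected_on V E" "symp E" "2 \<le> card V"
    and "connected_ordering E (tl s)"
  shows "L_root_leaf E s (hd s)"
  using label_search_ordering_distinct_card[OF assms(1)] assms(4)
  by (intro L_root_leaf_hd GS_ordering_connected_ordering[OF assms(1-3)] assms(5)) auto

theorem theorem1:
  fixes V :: "'a set" and E :: "'a \<Rightarrow> 'a \<Rightarrow> bool" and v :: 'a
  assumes "simple_graph V E" and "connected_on V E" and "card V \<ge> 2" and "v \<in> V"
  shows "((\<exists>\<sigma>. DFS_ordering V E \<sigma> \<and> hd \<sigma> = v \<and> L_root_leaf E \<sigma> v) \<longleftrightarrow> \<not> cut_vertex V E v)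
    \<and> ((\<forall>\<sigma>. DFS_ordering V E \<sigma> \<and> hd \<sigma> = v \<longrightarrow> L_root_leaf E \<sigma> v) \<longleftrightarrow> \<not> cut_vertex V E v)
    \<and> ((\<exists>\<sigma>. MCS_ordering V E \<sigma> \<and> L_root_leaf E \<sigma> v) \<longleftrightarrow> \<not> cut_vertex V E v)
    \<and> ((\<exists>\<sigma>. GS_ordering V E \<sigma> \<and> L_root_leaf E \<sigma> v) \<longleftrightarrow> \<not> cut_vertex V E v)
    \<and> ((\<exists>\<sigma>. GS_ordering V E \<sigma> \<and> L_branch_leaf E \<sigma> v) \<longleftrightarrow> \<not> cut_vertex V E v)
    \<and> ((\<exists>\<sigma>. GS_ordering V E \<sigma> \<and> F_branch_leaf E \<sigma> v) \<longleftrightarrow> \<not> cut_vertex V E v)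
    \<and> ((\<exists>\<sigma>. GS_ordering V E \<sigma> \<and> last \<sigma> = v) \<longleftrightarrow> \<not> cut_vertex V E v)"
proof -
  have fin: "finite V" and sym: "symp E"
    using assms(1) by (auto simp: simple_graph_def symp_def)
  have not_cut: "\<not> cut_vertex V E v \<longleftrightarrow> connected_on (V - {v}) E"
    using assms(4) by (simp add: cut_vertex_def)
  note DFS_GS = DFS_ordering_imp_GS_ordering and MCS_GS = MCS_ordering_imp_GS_ordering
  note last_leaf = GS_ordering_last_branch_leaf[OF _ assms(2) sym assms(3)]
  note root_leaf = GS_ordering_L_root_leaf[OF _ assms(2) sym assms(3)]
  obtain s0 where s0: "DFS_ordering V E s0" "hd s0 = v"
    using DFS_ordering_from[OF fin assms(4)] by blast
  show ?thesis
  proof (cases "connected_on (V - {v}) E")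
    case True
    have DFS_root_leaf: "L_root_leaf E \<sigma> v" if "DFS_ordering V E \<sigma>" "hd \<sigma> = v" for \<sigma>
      using root_leaf[OF DFS_GS[OF that(1)] DFS_ordering_tl_connected[OF that(1) sym]] True that(2)
      by simp
    obtain \<sigma>m where m: "MCS_ordering V E \<sigma>m" "L_root_leaf E \<sigma>m v"
      using MCS_ordering_from_nonseparating[OF fin sym True assms(4)] root_leaf[OF MCS_GS] by blast
    moreover obtain \<sigma>l where "GS_ordering V E \<sigma>l" "last \<sigma>l = v"
      using GS_ordering_ending_at[OF fin True assms(4,3)] by blast
    ultimately show ?thesis
      using True s0 DFS_root_leaf last_leaf[of \<sigma>l] MCS_GS[OF m(1)] unfolding not_cut by auto
  next
    case False
    have "\<not> L_leaf E \<sigma> v" "\<not> F_leaf E \<sigma> v" if "GS_ordering V E \<sigma>" for \<sigma>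
      using GS_ordering_leaf_nonseparating[OF that assms(2) sym] False by blast+
    then show ?thesis
      using False s0 DFS_GS MCS_GS last_leaf unfolding not_cut
      unfolding L_root_leaf_def L_branch_leaf_def F_branch_leaf_def by blast
  qed
qed

end
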